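(* Let $X$ be a (Tychonoff) space. (a) If $X$ is a finite $C$-space and $Y\subset X$ is $C^*$-embedded in $X$, then $Y$ is a finite $C$-space. (b) $X$ is a finite $C$-space if and only if its Čech–Stone compactification $\beta X$ is a $C$-space.
   Context: A set is functionally open if it is a cozero set. $Y\subset X$ is $C^*$-embedded if every bounded continuous real function on $Y$ extends to a bounded continuous function on $X$. $X$ is a $C$-space if every sequence $\{\omega_n\}$ of locally finite covers of $X$ by functionally open sets has a $C$-refinement $\{\gamma_n\}$ (each $\gamma_n$ a disjoint family of open sets refining $\omega_n$, with $\bigcup_n\gamma_n$ covering $X$) such that $\bigcup_n\gamma_n$ is a locally finite cover of $X$ by functionally open sets. $X$ is a finite $C$-space if for every sequence $\{\omega_n\}$ of finite covers of $X$ by functionally open sets there exist $k$ and finite families $\gamma_1,\dots,\gamma_k$ of pairwise disjoint functionally open sets such that each $\gamma_n$ refines $\omega_n$ and $\bigcup_{n=1}^k\gamma_n$ covers $X$. *)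

theory Defs
  imports "HOL-Analysis.Analysis"
begin

definition Tychonoff_space :: "'a topology \<Rightarrow> bool" where
  "Tychonoff_space X \<longleftrightarrow> completely_regular_space X \<and> Hausdorff_space X"

definition functionally_open :: "'a topology \<Rightarrow> 'a set \<Rightarrow> bool" where
  "functionally_open X U \<longleftrightarrow>
     (\<exists>f. continuous_map X euclideanreal f \<and> U = {x \<in> topspace X. f x \<noteq> 0})"

definition fo_cover :: "'a topology \<Rightarrow> 'a set set \<Rightarrow> bool" where
  "fo_cover X \<U> \<longleftrightarrow> (\<forall>U\<in>\<U>. functionally_open X U) \<and> \<Union>\<U> = topspace X"

definition refines :: "'a set set \<Rightarrow> 'a set set \<Rightarrow> bool" where
  "refines \<G> \<W> \<longleftrightarrow> (\<forall>G\<in>\<G>. \<exists>W\<in>\<W>. G \<subseteq> W)"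

definition C_star_embedded :: "'a topology \<Rightarrow> 'a set \<Rightarrow> bool" where
  "C_star_embedded X Y \<longleftrightarrow> Y \<subseteq> topspace X \<and>
     (\<forall>f. continuous_map (subtopology X Y) euclideanreal f \<and> bounded (f ` Y) \<longrightarrow>
        (\<exists>g. continuous_map X euclideanreal g \<and> bounded (g ` topspace X) \<and>
             (\<forall>y\<in>Y. g y = f y)))"

definition C_space :: "'a topology \<Rightarrow> bool" where
  "C_space X \<longleftrightarrow>
    (\<forall>\<omega> :: nat \<Rightarrow> 'a set set.
       (\<forall>n. fo_cover X (\<omega> n) \<and> locally_finite_in X (\<omega> n)) \<longrightarrow>
       (\<exists>\<gamma> :: nat \<Rightarrow> 'a set set.
          (\<forall>n. pairwise disjnt (\<gamma> n) \<and> (\<forall>G\<in>\<gamma> n. openin X G) \<and> refines (\<gamma> n) (\<omega> n)) \<and>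
          fo_cover X (\<Union>n. \<gamma> n) \<and> locally_finite_in X (\<Union>n. \<gamma> n)))"

definition finite_C_space :: "'a topology \<Rightarrow> bool" where
  "finite_C_space X \<longleftrightarrow>
    (\<forall>\<omega> :: nat \<Rightarrow> 'a set set.
       (\<forall>n. finite (\<omega> n) \<and> fo_cover X (\<omega> n)) \<longrightarrow>
       (\<exists>k. \<exists>\<gamma> :: nat \<Rightarrow> 'a set set.
          (\<forall>n<k. finite (\<gamma> n) \<and> pairwise disjnt (\<gamma> n) \<and>
                 (\<forall>G\<in>\<gamma> n. functionally_open X G) \<and> refines (\<gamma> n) (\<omega> n)) \<and>
          (\<Union>n<k. \<Union>(\<gamma> n)) = topspace X))"

definition Cech_Stone_compactification ::
    "'a topology \<Rightarrow> 'b topology \<Rightarrow> ('a \<Rightarrow> 'b) \<Rightarrow> bool" where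
  "Cech_Stone_compactification X K e \<longleftrightarrow>
     compact_space K \<and> Hausdorff_space K \<and> embedding_map X K e \<and>
     K closure_of (e ` topspace X) = topspace K \<and>
     (\<forall>f. continuous_map X euclideanreal f \<and> bounded (f ` topspace X) \<longrightarrow>
        (\<exists>g. continuous_map K euclideanreal g \<and> (\<forall>x\<in>topspace X. g (e x) = f x)))"

end

theory Submission
  imports Defs
begin

text \<open>
  Everything follows from two transfer principles for a continuous map \<open>e\<close> along which all
  bounded continuous real functions extend. Pulling back: a finite cozero cover of the domain
  has a partition of unity, whose extensions have cozero sets covering the target together with
  the cozero set of their sum minus 1, which misses the image of \<open>e\<close>; preimages of disjoint
  cozero refinements of these covers refine the original ones. Pushing forward along a
  dense \<open>e\<close>: shrink the cover of the target so that closures stay inside, pull it back,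
  refine it, and extend a partition of unity subordinate to the refinement.
\<close>

lemma functionally_open_cozero:
  "continuous_map X euclideanreal f \<Longrightarrow> functionally_open X {x \<in> topspace X. f x \<noteq> 0}"
  unfolding functionally_open_def by blast

lemma functionally_open_subset_topspace: "functionally_open X U \<Longrightarrow> U \<subseteq> topspace X"
  unfolding functionally_open_def by blast

lemma functionally_open_imp_openin:
  assumes "functionally_open X U"
  shows "openin X U"
proof -
  obtain f where f: "continuous_map X euclideanreal f" and U: "U = {x \<in> topspace X. f x \<noteq> 0}"
    using assms unfolding functionally_open_def by blast
  have "openin X {x \<in> topspace X. f x \<in> - {0}}"
    by (rule openin_continuous_map_preimage[OF f]) auto
  then show ?thesis
    using U by simp
qed

lemma functionally_open_nonneg:
  assumes "functionally_open X U"
  obtains f where "continuous_map X euclideanreal f" "\<And>x. 0 \<le> f x"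
    "U = {x \<in> topspace X. f x \<noteq> 0}"
proof -
  obtain f where "continuous_map X euclideanreal f" "U = {x \<in> topspace X. f x \<noteq> 0}"
    using assms unfolding functionally_open_def by blast
  then show ?thesis
    using that[of "\<lambda>x. \<bar>f x\<bar>"] by (simp add: continuous_map_real_abs)
qed

lemma functionally_open_preimage:
  assumes "continuous_map Y X e" and "functionally_open X U"
  shows "functionally_open Y {y \<in> topspace Y. e y \<in> U}"
proof -
  obtain f where f: "continuous_map X euclideanreal f" and U: "U = {x \<in> topspace X. f x \<noteq> 0}"
    using assms(2) unfolding functionally_open_def by blast
  have "{y \<in> topspace Y. e y \<in> U} = {y \<in> topspace Y. (f \<circ> e) y \<noteq> 0}"
    using U continuous_map_image_subset_topspace[OF assms(1)] by auto
  then show ?thesis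
    using functionally_open_cozero[OF continuous_map_compose[OF assms(1) f]] by simp
qed

lemma continuous_map_zero_on_closure_of:
  assumes f: "continuous_map X euclideanreal f" and zero: "\<And>x. x \<in> S \<Longrightarrow> f x = 0"
    and p: "p \<in> X closure_of S"
  shows "f p = 0"
proof (rule forall_in_closure_of[OF p zero])
  show "closedin X {x \<in> topspace X. f x = 0}"
    using closedin_continuous_map_preimage[OF f, of "{0}"] by simp
qed

lemma continuous_map_const_on_dense_image:
  assumes f: "continuous_map K euclideanreal f"
    and dense: "K closure_of (e ` topspace X) = topspace K"
    and const: "\<And>x. x \<in> topspace X \<Longrightarrow> f (e x) = c" and p: "p \<in> topspace K"
  shows "f p = c"
proof -
  have "f p - c = 0"
  proof (rule continuous_map_zero_on_closure_of[where f = "\<lambda>p. f p - c"])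
    show "continuous_map K euclideanreal (\<lambda>p. f p - c)"
      using f by (intro continuous_map_diff) auto
    show "p \<in> K closure_of (e ` topspace X)"
      using p dense by simp
  qed (use const in auto)
  then show ?thesis
    by simp
qed

lemma cozero_subset_closure_of_dense_image:
  assumes g: "continuous_map K euclideanreal g"
    and dense: "K closure_of (e ` topspace X) = topspace K"
    and zero: "\<And>x. x \<in> topspace X \<Longrightarrow> x \<notin> G \<Longrightarrow> g (e x) = 0"
  shows "{p \<in> topspace K. g p \<noteq> 0} \<subseteq> K closure_of (e ` G)"
    and "{p \<in> topspace K. g p \<noteq> 0} \<inter> K closure_of (e ` (topspace X - G)) = {}"
proof -
  have g_zero: "g p = 0" if "p \<in> K closure_of (e ` (topspace X - G))" for p
    using continuous_map_zero_on_closure_of[OF g _ that] zero by blast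
  then show "{p \<in> topspace K. g p \<noteq> 0} \<inter> K closure_of (e ` (topspace X - G)) = {}"
    by blast
  have "topspace K \<subseteq> K closure_of (e ` G) \<union> K closure_of (e ` (topspace X - G))"
    unfolding dense[symmetric] closure_of_Un[symmetric] by (intro closure_of_mono) blast
  then show "{p \<in> topspace K. g p \<noteq> 0} \<subseteq> K closure_of (e ` G)"
    using g_zero by blast
qed

definition cozero_partition_of_unity ::
    "'a topology \<Rightarrow> 'a set set \<Rightarrow> ('a set \<Rightarrow> 'a \<Rightarrow> real) \<Rightarrow> bool" where
  "cozero_partition_of_unity X \<U> h \<longleftrightarrow>
     (\<forall>U\<in>\<U>. continuous_map X euclideanreal (h U) \<and> (\<forall>x. 0 \<le> h U x \<and> h U x \<le> 1) \<and>
            U = {x \<in> topspace X. h U x \<noteq> 0}) \<and>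
     (\<forall>x\<in>topspace X. (\<Sum>U\<in>\<U>. h U x) = 1)"

lemma cozero_partition_of_unityD:
  assumes "cozero_partition_of_unity X \<U> h"
  shows "\<And>U. U \<in> \<U> \<Longrightarrow> continuous_map X euclideanreal (h U)"
    and "\<And>U x. U \<in> \<U> \<Longrightarrow> 0 \<le> h U x \<and> h U x \<le> 1"
    and "\<And>U x. U \<in> \<U> \<Longrightarrow> x \<in> U \<longleftrightarrow> x \<in> topspace X \<and> h U x \<noteq> 0"
    and "\<And>x. x \<in> topspace X \<Longrightarrow> (\<Sum>U\<in>\<U>. h U x) = 1"
  using assms unfolding cozero_partition_of_unity_def by blast+

lemma fo_cover_partition_of_unity:
  assumes fin: "finite \<U>" and cov: "fo_cover X \<U>"
  obtains h where "cozero_partition_of_unity X \<U> h"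
proof -
  have "\<forall>U\<in>\<U>. \<exists>f. continuous_map X euclideanreal f \<and> (\<forall>x. 0 \<le> f x) \<and>
                  U = {x \<in> topspace X. f x \<noteq> 0}"
    using cov functionally_open_nonneg unfolding fo_cover_def by metis
  then obtain f where f: "\<And>U. U \<in> \<U> \<Longrightarrow> continuous_map X euclideanreal (f U)"
    and f_nonneg: "\<And>U x. U \<in> \<U> \<Longrightarrow> 0 \<le> f U x"
    and f_cozero: "\<And>U. U \<in> \<U> \<Longrightarrow> U = {x \<in> topspace X. f U x \<noteq> 0}"
    by metis
  define s where "s x = (\<Sum>U\<in>\<U>. f U x)" for x
  have s_pos: "0 < s x" if x: "x \<in> topspace X" for x
  proof -
    obtain U where U: "U \<in> \<U>" "x \<in> U"
      using cov x unfolding fo_cover_def by blast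
    then have "0 < f U x"
      using f_nonneg[of U x] f_cozero[of U] by force
    then show ?thesis
      unfolding s_def using fin U(1) f_nonneg by (intro sum_pos2) auto
  qed
  have f_le_s: "f U x \<le> s x" if "U \<in> \<U>" for U x
    unfolding s_def using fin that f_nonneg by (intro member_le_sum) auto
  have s: "continuous_map X euclideanreal s"
    unfolding s_def using fin f by (intro continuous_map_sum) auto
  have "cozero_partition_of_unity X \<U> (\<lambda>U x. f U x / s x)"
    unfolding cozero_partition_of_unity_def
  proof (intro conjI ballI allI)
    fix U x assume U: "U \<in> \<U>"
    show "continuous_map X euclideanreal (\<lambda>x. f U x / s x)"
      using f[OF U] s s_pos by (intro continuous_map_real_divide) force+
    show "0 \<le> f U x / s x" "f U x / s x \<le> 1"
      using f_nonneg[OF U, of x] f_le_s[OF U, of x] by (auto simp: divide_le_eq_1)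
    show "U = {x \<in> topspace X. f U x / s x \<noteq> 0}"
      using f_cozero[OF U] s_pos by force
  next
    fix x assume "x \<in> topspace X"
    then have "s x \<noteq> 0"
      using s_pos by force
    then show "(\<Sum>U\<in>\<U>. f U x / s x) = 1"
      by (simp add: sum_divide_distrib[symmetric] s_def)
  qed
  then show ?thesis ..
qed

lemma fo_cover_shrinking:
  assumes fin: "finite \<U>" and cov: "fo_cover X \<U>"
  shows "\<exists>S. (\<forall>U\<in>\<U>. functionally_open X (S U) \<and> X closure_of S U \<subseteq> U) \<and>
             (\<Union>U\<in>\<U>. S U) = topspace X"
proof -
  obtain h where h: "cozero_partition_of_unity X \<U> h"
    using fo_cover_partition_of_unity[OF fin cov] .
  note h_cont = cozero_partition_of_unityD(1)[OF h]
    and h_cozero = cozero_partition_of_unityD(3)[OF h]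
    and h_sum = cozero_partition_of_unityD(4)[OF h]
  \<comment> \<open>the \<open>h U x\<close> sum to 1, so one of them exceeds \<open>1 / c\<close>: the \<open>S U\<close> still cover\<close>
  define c where "c = 2 * real (card \<U>)"
  define S where "S U = {x \<in> topspace X. 1 < c * h U x}" for U
  have "functionally_open X (S U)" if U: "U \<in> \<U>" for U
  proof -
    have "S U = {x \<in> topspace X. max 0 (c * h U x - 1) \<noteq> 0}"
      unfolding S_def by (auto simp: max_def)
    then show ?thesis
      using h_cont[OF U] by (simp add: functionally_open_cozero continuous_map_real_max
          continuous_map_diff continuous_map_real_mult)
  qed
  moreover have "X closure_of S U \<subseteq> U" if U: "U \<in> \<U>" for U
  proof -
    have closed: "closedin X {x \<in> topspace X. c * h U x \<in> {1..}}"
      using h_cont[OF U]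
      by (intro closedin_continuous_map_preimage[where Y=euclideanreal] continuous_map_real_mult) auto
    have "S U \<subseteq> {x \<in> topspace X. c * h U x \<in> {1..}}"
      unfolding S_def by auto
    then have "X closure_of S U \<subseteq> {x \<in> topspace X. c * h U x \<in> {1..}}"
      using closed by (rule closure_of_minimal)
    also have "\<dots> \<subseteq> U"
      using h_cozero[OF U] by force
    finally show ?thesis .
  qed
  moreover have "\<exists>U\<in>\<U>. x \<in> S U" if x: "x \<in> topspace X" for x
  proof (rule ccontr)
    assume "\<not> ?thesis"
    then have "\<forall>U\<in>\<U>. c * h U x \<le> 1"
      using x unfolding S_def by auto
    then have "c * (\<Sum>U\<in>\<U>. h U x) \<le> real (card \<U>)"
      using sum_mono[of \<U> "\<lambda>U. c * h U x" "\<lambda>_. 1"] by (simp add: sum_distrib_left)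
    then have "card \<U> = 0"
      using h_sum[OF x] by (simp add: c_def)
    then have "\<U> = {}"
      using fin by simp
    then show False
      using h_sum[OF x] by simp
  qed
  moreover have "(\<Union>U\<in>\<U>. S U) \<subseteq> topspace X"
    unfolding S_def by blast
  ultimately show ?thesis
    by (intro exI[of _ S]) blast
qed

definition bounded_functions_extend :: "'a topology \<Rightarrow> 'b topology \<Rightarrow> ('a \<Rightarrow> 'b) \<Rightarrow> bool" where
  "bounded_functions_extend Y X e \<longleftrightarrow>
     (\<forall>f. continuous_map Y euclideanreal f \<and> bounded (f ` topspace Y) \<longrightarrow>
        (\<exists>g. continuous_map X euclideanreal g \<and> (\<forall>y\<in>topspace Y. g (e y) = f y)))"

lemma partition_of_unity_extend:
  assumes h: "cozero_partition_of_unity Y \<U> h" and ext: "bounded_functions_extend Y X e"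
  obtains g where "\<And>U. U \<in> \<U> \<Longrightarrow> continuous_map X euclideanreal (g U)"
    "\<And>U y. U \<in> \<U> \<Longrightarrow> y \<in> topspace Y \<Longrightarrow> g U (e y) = h U y"
proof -
  have "\<forall>U\<in>\<U>. \<exists>g. continuous_map X euclideanreal g \<and> (\<forall>y\<in>topspace Y. g (e y) = h U y)"
  proof
    fix U assume U: "U \<in> \<U>"
    have "bounded (h U ` topspace Y)"
      using cozero_partition_of_unityD(2)[OF h U] unfolding bounded_iff
      by (intro exI[of _ 1]) auto
    then show "\<exists>g. continuous_map X euclideanreal g \<and> (\<forall>y\<in>topspace Y. g (e y) = h U y)"
      using ext cozero_partition_of_unityD(1)[OF h U] unfolding bounded_functions_extend_def by blast
  qed
  then show ?thesis
    using that by metis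
qed

lemma exists_finite_fo_cover_preimages_refine:
  assumes e: "continuous_map Y X e" and ext: "bounded_functions_extend Y X e"
    and fin: "finite \<U>" and cov: "fo_cover Y \<U>" and ne: "topspace Y \<noteq> {}"
  shows "\<exists>\<V>. finite \<V> \<and> fo_cover X \<V> \<and> (\<forall>V\<in>\<V>. \<exists>U\<in>\<U>. {y \<in> topspace Y. e y \<in> V} \<subseteq> U)"
proof -
  obtain h where h: "cozero_partition_of_unity Y \<U> h"
    using fo_cover_partition_of_unity[OF fin cov] .
  obtain g where g: "\<And>U. U \<in> \<U> \<Longrightarrow> continuous_map X euclideanreal (g U)"
    and g_h: "\<And>U y. U \<in> \<U> \<Longrightarrow> y \<in> topspace Y \<Longrightarrow> g U (e y) = h U y"
    using partition_of_unity_extend[OF h ext] by blast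
  define R where "R = {x \<in> topspace X. (\<Sum>U\<in>\<U>. g U x) - 1 \<noteq> 0}"
  define \<V> where "\<V> = insert R ((\<lambda>U. {x \<in> topspace X. g U x \<noteq> 0}) ` \<U>)"
  have "functionally_open X R"
    unfolding R_def using fin g
    by (intro functionally_open_cozero continuous_map_diff continuous_map_sum) auto
  then have \<V>_fo: "\<forall>V\<in>\<V>. functionally_open X V"
    unfolding \<V>_def using g by (auto intro: functionally_open_cozero)
  have \<V>_cov: "\<Union>\<V> = topspace X"
  proof
    show "\<Union>\<V> \<subseteq> topspace X"
      unfolding \<V>_def R_def by auto
    show "topspace X \<subseteq> \<Union>\<V>"
    proof
      fix x assume x: "x \<in> topspace X"
      show "x \<in> \<Union>\<V>"
      proof (cases "(\<Sum>U\<in>\<U>. g U x) = 1")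
        case True
        then obtain U where "U \<in> \<U>" "g U x \<noteq> 0"
          by (metis sum.neutral zero_neq_one)
        then show ?thesis
          using x unfolding \<V>_def by blast
      qed (use x in \<open>auto simp: \<V>_def R_def\<close>)
    qed
  qed
  have pre_cozero: "{y \<in> topspace Y. e y \<in> {x \<in> topspace X. g U x \<noteq> 0}} = U" if U: "U \<in> \<U>" for U
  proof -
    have "{y \<in> topspace Y. e y \<in> {x \<in> topspace X. g U x \<noteq> 0}} = {y \<in> topspace Y. h U y \<noteq> 0}"
      using g_h[OF U] continuous_map_image_subset_topspace[OF e] by auto
    also have "\<dots> = U"
      using cozero_partition_of_unityD(3)[OF h U] by blast
    finally show ?thesis .
  qed
  have pre_R: "{y \<in> topspace Y. e y \<in> R} = {}"
    using g_h cozero_partition_of_unityD(4)[OF h] unfolding R_def by simp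
  obtain U\<^sub>0 where "U\<^sub>0 \<in> \<U>"
    using cov ne unfolding fo_cover_def by blast
  then have "\<forall>V\<in>\<V>. \<exists>U\<in>\<U>. {y \<in> topspace Y. e y \<in> V} \<subseteq> U"
    unfolding \<V>_def using pre_cozero pre_R by auto
  moreover have "finite \<V>"
    unfolding \<V>_def using fin by simp
  ultimately show ?thesis
    using \<V>_fo \<V>_cov unfolding fo_cover_def by blast
qed

lemma exists_finite_fo_cover_image_closures_refine:
  assumes e: "continuous_map X K e" and fin: "finite \<U>" and cov: "fo_cover K \<U>"
  shows "\<exists>\<V>. finite \<V> \<and> fo_cover X \<V> \<and> (\<forall>V\<in>\<V>. \<exists>U\<in>\<U>. K closure_of (e ` V) \<subseteq> U)"
proof -
  obtain S where S_fo: "\<And>U. U \<in> \<U> \<Longrightarrow> functionally_open K (S U)"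
    and S_closure: "\<And>U. U \<in> \<U> \<Longrightarrow> K closure_of S U \<subseteq> U"
    and S_cov: "(\<Union>U\<in>\<U>. S U) = topspace K"
    using fo_cover_shrinking[OF fin cov] by blast
  define \<V> where "\<V> = (\<lambda>U. {x \<in> topspace X. e x \<in> S U}) ` \<U>"
  have "\<Union>\<V> = topspace X"
    using S_cov continuous_map_image_subset_topspace[OF e] unfolding \<V>_def by blast
  then have "fo_cover X \<V>"
    using functionally_open_preimage[OF e S_fo] unfolding fo_cover_def \<V>_def by blast
  moreover have "\<exists>U\<in>\<U>. K closure_of (e ` V) \<subseteq> U" if "V \<in> \<V>" for V
  proof -
    obtain U where U: "U \<in> \<U>" "V = {x \<in> topspace X. e x \<in> S U}"
      using \<open>V \<in> \<V>\<close> unfolding \<V>_def by blast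
    then have "K closure_of (e ` V) \<subseteq> K closure_of S U"
      by (intro closure_of_mono) blast
    then show ?thesis
      using U(1) S_closure[OF U(1)] by blast
  qed
  ultimately show ?thesis
    using fin unfolding \<V>_def by blast
qed

lemma finite_fo_cover_extends_to_dense:
  assumes e: "continuous_map X K e" and dense: "K closure_of (e ` topspace X) = topspace K"
    and ext: "bounded_functions_extend X K e" and fin: "finite \<A>" and cov: "fo_cover X \<A>"
  obtains P where "\<And>G. G \<in> \<A> \<Longrightarrow> functionally_open K (P G)"
    "\<And>G. G \<in> \<A> \<Longrightarrow> P G \<subseteq> K closure_of (e ` G)"
    "\<And>G G'. G \<in> \<A> \<Longrightarrow> G' \<in> \<A> \<Longrightarrow> disjnt G G' \<Longrightarrow> disjnt (P G) (P G')"
    "(\<Union>G\<in>\<A>. P G) = topspace K"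
proof -
  obtain h where h: "cozero_partition_of_unity X \<A> h"
    using fo_cover_partition_of_unity[OF fin cov] .
  obtain g where g: "\<And>G. G \<in> \<A> \<Longrightarrow> continuous_map K euclideanreal (g G)"
    and g_h: "\<And>G x. G \<in> \<A> \<Longrightarrow> x \<in> topspace X \<Longrightarrow> g G (e x) = h G x"
    using partition_of_unity_extend[OF h ext] by blast
  define P where "P G = {p \<in> topspace K. g G p \<noteq> 0}" for G
  have g_zero: "g G (e x) = 0" if "G \<in> \<A>" "x \<in> topspace X" "x \<notin> G" for G x
    using that g_h cozero_partition_of_unityD(3)[OF h] by force
  have P_closure: "P G \<subseteq> K closure_of (e ` G)" if "G \<in> \<A>" for G
    unfolding P_def by (rule cozero_subset_closure_of_dense_image(1)[OF g[OF that] dense g_zero[OF that]])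
  have P_avoid: "P G \<inter> K closure_of (e ` (topspace X - G)) = {}" if "G \<in> \<A>" for G
    unfolding P_def by (rule cozero_subset_closure_of_dense_image(2)[OF g[OF that] dense g_zero[OF that]])
  have "disjnt (P G) (P G')" if G: "G \<in> \<A>" "G' \<in> \<A>" and "disjnt G G'" for G G'
  proof -
    have "e ` G' \<subseteq> e ` (topspace X - G)"
      using \<open>disjnt G G'\<close> cov G(2) functionally_open_subset_topspace
      unfolding fo_cover_def disjnt_def by blast
    then have "P G' \<subseteq> K closure_of (e ` (topspace X - G))"
      using P_closure[OF G(2)] closure_of_mono by blast
    then show ?thesis
      using P_avoid[OF G(1)] unfolding disjnt_def by blast
  qed
  moreover have "(\<Union>G\<in>\<A>. P G) = topspace K"
  proof
    show "(\<Union>G\<in>\<A>. P G) \<subseteq> topspace K"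
      unfolding P_def by blast
    show "topspace K \<subseteq> (\<Union>G\<in>\<A>. P G)"
    proof
      fix p assume p: "p \<in> topspace K"
      have "(\<Sum>G\<in>\<A>. g G p) = 1"
      proof (rule continuous_map_const_on_dense_image[OF _ dense _ p])
        show "continuous_map K euclideanreal (\<lambda>p. \<Sum>G\<in>\<A>. g G p)"
          using g fin by (intro continuous_map_sum) auto
        show "(\<Sum>G\<in>\<A>. g G (e x)) = 1" if "x \<in> topspace X" for x
          using g_h[OF _ that] cozero_partition_of_unityD(4)[OF h that] by simp
      qed
      then obtain G where "G \<in> \<A>" "g G p \<noteq> 0"
        by (metis sum.neutral zero_neq_one)
      then show "p \<in> (\<Union>G\<in>\<A>. P G)"
        using p unfolding P_def by blast
    qed
  qed
  moreover have "functionally_open K (P G)" if "G \<in> \<A>" for G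
    unfolding P_def using g[OF that] by (rule functionally_open_cozero)
  ultimately show ?thesis
    using that P_closure by blast
qed

definition disjoint_fo_refinement :: "'a topology \<Rightarrow> 'a set set \<Rightarrow> 'a set set \<Rightarrow> bool" where
  "disjoint_fo_refinement X \<gamma> \<omega> \<longleftrightarrow>
     finite \<gamma> \<and> pairwise disjnt \<gamma> \<and> (\<forall>G\<in>\<gamma>. functionally_open X G) \<and> refines \<gamma> \<omega>"

lemma finite_C_space_iff:
  "finite_C_space X \<longleftrightarrow>
    (\<forall>\<omega> :: nat \<Rightarrow> 'a set set. (\<forall>n. finite (\<omega> n) \<and> fo_cover X (\<omega> n)) \<longrightarrow>
       (\<exists>k \<gamma>. (\<forall>n<k. disjoint_fo_refinement X (\<gamma> n) (\<omega> n)) \<and> (\<Union>n<k. \<Union>(\<gamma> n)) = topspace X))"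
  unfolding finite_C_space_def disjoint_fo_refinement_def ..

lemma finite_C_spaceE:
  fixes \<omega> :: "nat \<Rightarrow> 'a set set"
  assumes "finite_C_space X" and "\<And>n. finite (\<omega> n)" and "\<And>n. fo_cover X (\<omega> n)"
  obtains k \<gamma> where "\<And>n. n < k \<Longrightarrow> disjoint_fo_refinement X (\<gamma> n) (\<omega> n)"
    "(\<Union>n<k. \<Union>(\<gamma> n)) = topspace X"
proof -
  have "\<exists>k \<gamma>. (\<forall>n<k. disjoint_fo_refinement X (\<gamma> n) (\<omega> n)) \<and> (\<Union>n<k. \<Union>(\<gamma> n)) = topspace X"
    by (rule assms(1)[unfolded finite_C_space_iff, rule_format]) (simp add: assms(2,3))
  then obtain k \<gamma> where "\<forall>n<k. disjoint_fo_refinement X (\<gamma> n) (\<omega> n)"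
    "(\<Union>n<k. \<Union>(\<gamma> n)) = topspace X"
    by (elim exE conjE)
  then show ?thesis
    by (intro that[of k \<gamma>]) simp_all
qed

lemma finite_C_space_empty: "topspace X = {} \<Longrightarrow> finite_C_space X"
  unfolding finite_C_space_def by (intro allI impI exI[of _ 0] exI[of _ "\<lambda>_. {}"]) auto

lemma disjoint_fo_refinement_preimage:
  assumes e: "continuous_map Y X e" and \<gamma>: "disjoint_fo_refinement X \<gamma> \<V>"
    and refine: "\<And>V. V \<in> \<V> \<Longrightarrow> \<exists>U\<in>\<U>. {y \<in> topspace Y. e y \<in> V} \<subseteq> U"
  shows "disjoint_fo_refinement Y ((\<lambda>G. {y \<in> topspace Y. e y \<in> G}) ` \<gamma>) \<U>"
proof -
  define pre where "pre = (\<lambda>G. {y \<in> topspace Y. e y \<in> G})"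
  have "finite (pre ` \<gamma>)"
    using \<gamma> unfolding disjoint_fo_refinement_def by simp
  moreover have "pairwise disjnt (pre ` \<gamma>)"
    using \<gamma> unfolding disjoint_fo_refinement_def pairwise_def disjnt_def pre_def by blast
  moreover have "\<forall>G\<in>pre ` \<gamma>. functionally_open Y G"
    using \<gamma> functionally_open_preimage[OF e] unfolding disjoint_fo_refinement_def pre_def by blast
  moreover have "refines (pre ` \<gamma>) \<U>"
    unfolding refines_def
  proof
    fix G' assume "G' \<in> pre ` \<gamma>"
    then obtain G where G: "G \<in> \<gamma>" "G' = pre G"
      by blast
    then obtain V where V: "V \<in> \<V>" "G \<subseteq> V"
      using \<gamma> unfolding disjoint_fo_refinement_def refines_def by blast
    then obtain U where U: "U \<in> \<U>" "pre V \<subseteq> U"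
      using refine unfolding pre_def by blast
    have "pre G \<subseteq> pre V"
      using V(2) unfolding pre_def by blast
    then show "\<exists>U\<in>\<U>. G' \<subseteq> U"
      using G(2) U by blast
  qed
  ultimately have "disjoint_fo_refinement Y (pre ` \<gamma>) \<U>"
    unfolding disjoint_fo_refinement_def by blast
  then show ?thesis
    unfolding pre_def .
qed

lemma disjoint_fo_refinement_image:
  assumes \<gamma>: "disjoint_fo_refinement X \<gamma> \<V>" and "\<gamma> \<subseteq> \<A>"
    and P_fo: "\<And>G. G \<in> \<A> \<Longrightarrow> functionally_open K (P G)"
    and P_closure: "\<And>G. G \<in> \<A> \<Longrightarrow> P G \<subseteq> K closure_of (e ` G)"
    and P_disjnt: "\<And>G G'. G \<in> \<A> \<Longrightarrow> G' \<in> \<A> \<Longrightarrow> disjnt G G' \<Longrightarrow> disjnt (P G) (P G')"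
    and refine: "\<And>V. V \<in> \<V> \<Longrightarrow> \<exists>U\<in>\<U>. K closure_of (e ` V) \<subseteq> U"
  shows "disjoint_fo_refinement K (P ` \<gamma>) \<U>"
  unfolding disjoint_fo_refinement_def
proof (intro conjI)
  show "finite (P ` \<gamma>)"
    using \<gamma> unfolding disjoint_fo_refinement_def by simp
  show "pairwise disjnt (P ` \<gamma>)"
  proof (rule pairwise_imageI)
    fix G G' assume G: "G \<in> \<gamma>" "G' \<in> \<gamma>" "G \<noteq> G'"
    moreover have "pairwise disjnt \<gamma>"
      using \<gamma> unfolding disjoint_fo_refinement_def by blast
    ultimately have "disjnt G G'"
      by (simp add: pairwiseD)
    then show "disjnt (P G) (P G')"
      using P_disjnt G(1,2) \<open>\<gamma> \<subseteq> \<A>\<close> by blast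
  qed
  show "\<forall>G\<in>P ` \<gamma>. functionally_open K G"
    using \<open>\<gamma> \<subseteq> \<A>\<close> P_fo by blast
  show "refines (P ` \<gamma>) \<U>"
    unfolding refines_def
  proof
    fix G' assume "G' \<in> P ` \<gamma>"
    then obtain G where G: "G \<in> \<gamma>" "G' = P G"
      by blast
    then obtain V where V: "V \<in> \<V>" "G \<subseteq> V"
      using \<gamma> unfolding disjoint_fo_refinement_def refines_def by blast
    then obtain U where U: "U \<in> \<U>" "K closure_of (e ` V) \<subseteq> U"
      using refine by blast
    have "P G \<subseteq> K closure_of (e ` G)"
      using P_closure G(1) \<open>\<gamma> \<subseteq> \<A>\<close> by blast
    also have "\<dots> \<subseteq> K closure_of (e ` V)"
      using V(2) by (intro closure_of_mono image_mono)
    finally show "\<exists>U\<in>\<U>. G' \<subseteq> U"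
      using G(2) U by blast
  qed
qed

lemma finite_C_space_pullback:
  assumes X: "finite_C_space X" and e: "continuous_map Y X e"
    and ext: "bounded_functions_extend Y X e"
  shows "finite_C_space Y"
proof (cases "topspace Y = {}")
  case True
  then show ?thesis
    by (rule finite_C_space_empty)
next
  case False
  define pre where "pre = (\<lambda>G. {y \<in> topspace Y. e y \<in> G})"
  show ?thesis
    unfolding finite_C_space_iff
  proof (intro allI impI)
    fix \<omega> :: "nat \<Rightarrow> _"
    assume "\<forall>n. finite (\<omega> n) \<and> fo_cover Y (\<omega> n)"
    then have "\<forall>n. \<exists>\<V>. finite \<V> \<and> fo_cover X \<V> \<and> (\<forall>V\<in>\<V>. \<exists>U\<in>\<omega> n. pre V \<subseteq> U)"
      using exists_finite_fo_cover_preimages_refine[OF e ext _ _ False] unfolding pre_def by blast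
    then obtain \<V> :: "nat \<Rightarrow> _" where \<V>: "\<And>n. finite (\<V> n)" "\<And>n. fo_cover X (\<V> n)"
      and \<V>_refine: "\<And>n V. V \<in> \<V> n \<Longrightarrow> \<exists>U\<in>\<omega> n. pre V \<subseteq> U"
      by metis
    obtain k \<gamma> where \<gamma>: "\<And>n. n < k \<Longrightarrow> disjoint_fo_refinement X (\<gamma> n) (\<V> n)"
      and cov: "(\<Union>n<k. \<Union>(\<gamma> n)) = topspace X"
      by (rule finite_C_spaceE[where \<omega>=\<V>, OF X \<V>], rule that)
    have "disjoint_fo_refinement Y (pre ` \<gamma> n) (\<omega> n)" if "n < k" for n
      using disjoint_fo_refinement_preimage[OF e \<gamma>[OF that] \<V>_refine[unfolded pre_def]]
      unfolding pre_def .
    moreover have "(\<Union>n<k. \<Union>(pre ` \<gamma> n)) = topspace Y"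
    proof -
      have "(\<Union>n<k. \<Union>(pre ` \<gamma> n)) = pre (\<Union>n<k. \<Union>(\<gamma> n))"
        unfolding pre_def by auto
      then show ?thesis
        using cov continuous_map_image_subset_topspace[OF e] unfolding pre_def by auto
    qed
    ultimately show "\<exists>k \<gamma>. (\<forall>n<k. disjoint_fo_refinement Y (\<gamma> n) (\<omega> n)) \<and>
        (\<Union>n<k. \<Union>(\<gamma> n)) = topspace Y"
      by (intro exI[of _ k] exI[of _ "\<lambda>n. pre ` \<gamma> n"]) simp
  qed
qed

lemma finite_C_space_dense_extension:
  assumes X: "finite_C_space X" and e: "continuous_map X K e"
    and dense: "K closure_of (e ` topspace X) = topspace K"
    and ext: "bounded_functions_extend X K e"
  shows "finite_C_space K"
  unfolding finite_C_space_iff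
proof (intro allI impI)
  fix \<omega> :: "nat \<Rightarrow> _"
  assume "\<forall>n. finite (\<omega> n) \<and> fo_cover K (\<omega> n)"
  then have "\<forall>n. \<exists>\<V>. finite \<V> \<and> fo_cover X \<V> \<and> (\<forall>V\<in>\<V>. \<exists>U\<in>\<omega> n. K closure_of (e ` V) \<subseteq> U)"
    using exists_finite_fo_cover_image_closures_refine[OF e] by blast
  then obtain \<V> :: "nat \<Rightarrow> _" where \<V>: "\<And>n. finite (\<V> n)" "\<And>n. fo_cover X (\<V> n)"
    and \<V>_refine: "\<And>n V. V \<in> \<V> n \<Longrightarrow> \<exists>U\<in>\<omega> n. K closure_of (e ` V) \<subseteq> U"
    by metis
  obtain k \<gamma> where \<gamma>: "\<And>n. n < k \<Longrightarrow> disjoint_fo_refinement X (\<gamma> n) (\<V> n)"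
    and cov: "(\<Union>n<k. \<Union>(\<gamma> n)) = topspace X"
    by (rule finite_C_spaceE[where \<omega>=\<V>, OF X \<V>], rule that)
  define \<A> where "\<A> = (\<Union>n<k. \<gamma> n)"
  have \<A>_fin: "finite \<A>"
    using \<gamma> unfolding \<A>_def disjoint_fo_refinement_def by simp
  have \<A>_cov: "fo_cover X \<A>"
    using \<gamma> cov unfolding fo_cover_def \<A>_def disjoint_fo_refinement_def by blast
  obtain P where P_fo: "\<And>G. G \<in> \<A> \<Longrightarrow> functionally_open K (P G)"
    and P_closure: "\<And>G. G \<in> \<A> \<Longrightarrow> P G \<subseteq> K closure_of (e ` G)"
    and P_disjnt: "\<And>G G'. G \<in> \<A> \<Longrightarrow> G' \<in> \<A> \<Longrightarrow> disjnt G G' \<Longrightarrow> disjnt (P G) (P G')"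
    and P_cov: "(\<Union>G\<in>\<A>. P G) = topspace K"
    by (rule finite_fo_cover_extends_to_dense[OF e dense ext \<A>_fin \<A>_cov], rule that)
  have "disjoint_fo_refinement K (P ` \<gamma> n) (\<omega> n)" if "n < k" for n
  proof (rule disjoint_fo_refinement_image[OF \<gamma>[OF that] _ P_fo P_closure P_disjnt \<V>_refine])
    show "\<gamma> n \<subseteq> \<A>"
      unfolding \<A>_def using that by blast
  qed
  moreover have "(\<Union>n<k. \<Union>(P ` \<gamma> n)) = topspace K"
    using P_cov unfolding \<A>_def by blast
  ultimately show "\<exists>k \<gamma>. (\<forall>n<k. disjoint_fo_refinement K (\<gamma> n) (\<omega> n)) \<and>
      (\<Union>n<k. \<Union>(\<gamma> n)) = topspace K"
    by (intro exI[of _ k] exI[of _ "\<lambda>n. P ` \<gamma> n"]) simp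
qed

lemma locally_finite_in_compact_space_finite_nonempty:
  assumes K: "compact_space K" and lf: "locally_finite_in K \<A>"
  shows "finite {U \<in> \<A>. U \<noteq> {}}"
proof -
  have "\<forall>x\<in>topspace K. \<exists>V. openin K V \<and> x \<in> V \<and> finite {U \<in> \<A>. U \<inter> V \<noteq> {}}"
    using lf unfolding locally_finite_in_def by blast
  then obtain V where V: "\<And>x. x \<in> topspace K \<Longrightarrow> openin K (V x) \<and> x \<in> V x"
    and V_fin: "\<And>x. x \<in> topspace K \<Longrightarrow> finite {U \<in> \<A>. U \<inter> V x \<noteq> {}}"
    by metis
  have "(\<forall>W\<in>V ` topspace K. openin K W) \<and> topspace K \<subseteq> \<Union>(V ` topspace K)"
    using V by blast
  then obtain F where F: "finite F" "F \<subseteq> V ` topspace K" "topspace K \<subseteq> \<Union>F"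
    using K unfolding compact_space_alt by meson
  have "{U \<in> \<A>. U \<noteq> {}} \<subseteq> (\<Union>W\<in>F. {U \<in> \<A>. U \<inter> W \<noteq> {}})"
  proof
    fix U assume U: "U \<in> {U \<in> \<A>. U \<noteq> {}}"
    then obtain u where u: "u \<in> U"
      by blast
    then have "u \<in> topspace K"
      using lf U unfolding locally_finite_in_def by blast
    then obtain W where "W \<in> F" "u \<in> W"
      using F(3) by blast
    then show "U \<in> (\<Union>W\<in>F. {U \<in> \<A>. U \<inter> W \<noteq> {}})"
      using U u by blast
  qed
  moreover have "finite (\<Union>W\<in>F. {U \<in> \<A>. U \<inter> W \<noteq> {}})"
  proof (rule finite_UN_I[OF F(1)])
    fix W assume "W \<in> F"
    then obtain x where "x \<in> topspace K" "W = V x"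
      using F(2) by blast
    then show "finite {U \<in> \<A>. U \<inter> W \<noteq> {}}"
      using V_fin by blast
  qed
  ultimately show ?thesis
    by (rule finite_subset)
qed

lemma compact_space_finite_subcover_of_sequence:
  fixes \<gamma> :: "nat \<Rightarrow> 'a set set"
  assumes K: "compact_space K" and op: "\<forall>G\<in>(\<Union>n. \<gamma> n). openin K G"
    and cov: "topspace K \<subseteq> \<Union>(\<Union>n. \<gamma> n)"
  obtains k F where "finite F" "F \<subseteq> (\<Union>n<k. \<gamma> n)" "topspace K \<subseteq> \<Union>F"
proof -
  obtain F where F: "finite F" "F \<subseteq> (\<Union>n. \<gamma> n)" "topspace K \<subseteq> \<Union>F"
    using K op cov unfolding compact_space_alt by meson
  then have "\<forall>G\<in>F. \<exists>n. G \<in> \<gamma> n"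
    by blast
  then obtain idx where idx: "\<And>G. G \<in> F \<Longrightarrow> G \<in> \<gamma> (idx G)"
    by metis
  define k where "k = Suc (Max (idx ` F))"
  have "idx G < k" if "G \<in> F" for G
    unfolding k_def using F(1) that by (simp add: le_imp_less_Suc)
  then have "F \<subseteq> (\<Union>n<k. \<gamma> n)"
    using idx by blast
  then show ?thesis
    using that F(1,3) by blast
qed

lemma compact_space_finite_C_space_imp_C_space:
  assumes K: "compact_space K" and fC: "finite_C_space K"
  shows "C_space K"
  unfolding C_space_def
proof (intro allI impI)
  fix \<omega> :: "nat \<Rightarrow> _"
  assume \<omega>: "\<forall>n. fo_cover K (\<omega> n) \<and> locally_finite_in K (\<omega> n)"
  define \<omega>' where "\<omega>' n = {U \<in> \<omega> n. U \<noteq> {}}" for n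
  have \<omega>'_fin: "finite (\<omega>' n)" for n
    unfolding \<omega>'_def using locally_finite_in_compact_space_finite_nonempty[OF K] \<omega> by blast
  have "\<Union>(\<omega>' n) = \<Union>(\<omega> n)" for n
    unfolding \<omega>'_def by auto
  then have \<omega>'_cov: "fo_cover K (\<omega>' n)" for n
    using \<omega> unfolding fo_cover_def \<omega>'_def by auto
  obtain k \<gamma> where \<gamma>: "\<And>n. n < k \<Longrightarrow> disjoint_fo_refinement K (\<gamma> n) (\<omega>' n)"
    and cov: "(\<Union>n<k. \<Union>(\<gamma> n)) = topspace K"
    by (rule finite_C_spaceE[where \<omega>=\<omega>', OF fC \<omega>'_fin \<omega>'_cov], rule that)
  define \<gamma>' where "\<gamma>' n = (if n < k then \<gamma> n else {})" for n
  have \<gamma>'_Union: "(\<Union>n. \<gamma>' n) = (\<Union>n<k. \<gamma> n)"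
    unfolding \<gamma>'_def by auto
  have \<gamma>_Union: "\<Union>(\<Union>n<k. \<gamma> n) = topspace K"
    unfolding cov[symmetric] by auto
  have "pairwise disjnt (\<gamma>' n) \<and> (\<forall>G\<in>\<gamma>' n. openin K G) \<and> refines (\<gamma>' n) (\<omega> n)" for n
  proof (cases "n < k")
    case True
    then have "refines (\<gamma> n) (\<omega> n)"
      using \<gamma> unfolding disjoint_fo_refinement_def refines_def \<omega>'_def by blast
    then show ?thesis
      using True \<gamma> unfolding \<gamma>'_def disjoint_fo_refinement_def
      by (simp add: functionally_open_imp_openin)
  qed (simp add: \<gamma>'_def refines_def)
  moreover have "fo_cover K (\<Union>n. \<gamma>' n)"
    unfolding fo_cover_def \<gamma>'_Union using \<gamma> \<gamma>_Union unfolding disjoint_fo_refinement_def by blast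
  moreover have "locally_finite_in K (\<Union>n. \<gamma>' n)"
    unfolding \<gamma>'_Union using \<gamma> \<gamma>_Union unfolding disjoint_fo_refinement_def
    by (intro finite_imp_locally_finite_in) auto
  ultimately show "\<exists>\<gamma>. (\<forall>n. pairwise disjnt (\<gamma> n) \<and> (\<forall>G\<in>\<gamma> n. openin K G) \<and> refines (\<gamma> n) (\<omega> n)) \<and>
      fo_cover K (\<Union>n. \<gamma> n) \<and> locally_finite_in K (\<Union>n. \<gamma> n)"
    by (intro exI[of _ \<gamma>']) blast
qed

lemma compact_space_C_space_imp_finite_C_space:
  assumes K: "compact_space K" and C: "C_space K"
  shows "finite_C_space K"
  unfolding finite_C_space_iff
proof (intro allI impI)
  fix \<omega> :: "nat \<Rightarrow> _"
  assume "\<forall>n. finite (\<omega> n) \<and> fo_cover K (\<omega> n)"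
  then have \<omega>: "\<And>n. fo_cover K (\<omega> n) \<and> locally_finite_in K (\<omega> n)"
    unfolding fo_cover_def by (simp add: finite_imp_locally_finite_in)
  have "\<exists>\<gamma>. (\<forall>n. pairwise disjnt (\<gamma> n) \<and> (\<forall>G\<in>\<gamma> n. openin K G) \<and> refines (\<gamma> n) (\<omega> n)) \<and>
      fo_cover K (\<Union>n. \<gamma> n) \<and> locally_finite_in K (\<Union>n. \<gamma> n)"
    by (rule C[unfolded C_space_def, rule_format, OF \<omega>])
  then obtain \<gamma> where \<gamma>: "\<And>n. pairwise disjnt (\<gamma> n)" "\<And>n. refines (\<gamma> n) (\<omega> n)"
    and \<gamma>_fo_cover: "fo_cover K (\<Union>n. \<gamma> n)"
    by blast
  have "\<forall>G\<in>(\<Union>n. \<gamma> n). functionally_open K G"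
    using \<gamma>_fo_cover unfolding fo_cover_def by (rule conjunct1)
  then have \<gamma>_fo: "\<And>n G. G \<in> \<gamma> n \<Longrightarrow> functionally_open K G"
    and \<gamma>_open: "\<forall>G\<in>(\<Union>n. \<gamma> n). openin K G"
    by (auto intro: functionally_open_imp_openin)
  have \<gamma>_cov: "topspace K \<subseteq> \<Union>(\<Union>n. \<gamma> n)"
    using \<gamma>_fo_cover unfolding fo_cover_def by simp
  obtain k F where F: "finite F" "F \<subseteq> (\<Union>n<k. \<gamma> n)" "topspace K \<subseteq> \<Union>F"
    by (rule compact_space_finite_subcover_of_sequence[where \<gamma>=\<gamma>, OF K \<gamma>_open \<gamma>_cov], rule that)
  have "disjoint_fo_refinement K (\<gamma> n \<inter> F) (\<omega> n)" for n
    unfolding disjoint_fo_refinement_def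
  proof (intro conjI)
    show "finite (\<gamma> n \<inter> F)"
      using F(1) by simp
    show "pairwise disjnt (\<gamma> n \<inter> F)"
      using pairwise_subset[OF \<gamma>(1)] by blast
    show "\<forall>G\<in>\<gamma> n \<inter> F. functionally_open K G"
      using \<gamma>_fo by blast
    show "refines (\<gamma> n \<inter> F) (\<omega> n)"
      using \<gamma>(2) unfolding refines_def by blast
  qed
  moreover have "(\<Union>n<k. \<Union>(\<gamma> n \<inter> F)) = topspace K"
  proof
    show "(\<Union>n<k. \<Union>(\<gamma> n \<inter> F)) \<subseteq> topspace K"
      using \<gamma>_fo functionally_open_subset_topspace by blast
    show "topspace K \<subseteq> (\<Union>n<k. \<Union>(\<gamma> n \<inter> F))"
    proof
      fix p assume "p \<in> topspace K"
      then obtain G where G: "G \<in> F" "p \<in> G"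
        using F(3) by blast
      then obtain n where "n < k" "G \<in> \<gamma> n"
        using F(2) by blast
      then show "p \<in> (\<Union>n<k. \<Union>(\<gamma> n \<inter> F))"
        using G by blast
    qed
  qed
  ultimately show "\<exists>k \<gamma>. (\<forall>n<k. disjoint_fo_refinement K (\<gamma> n) (\<omega> n)) \<and>
      (\<Union>n<k. \<Union>(\<gamma> n)) = topspace K"
    by (intro exI[of _ k] exI[of _ "\<lambda>n. \<gamma> n \<inter> F"]) blast
qed

lemma C_star_embedded_imp_bounded_functions_extend:
  assumes "C_star_embedded X Y"
  shows "bounded_functions_extend (subtopology X Y) X id"
proof -
  have "topspace (subtopology X Y) = Y"
    using assms unfolding C_star_embedded_def by auto
  then show ?thesis
    using assms unfolding C_star_embedded_def bounded_functions_extend_def by auto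
qed

lemma Cech_Stone_compactificationD:
  assumes "Cech_Stone_compactification X K e"
  shows "compact_space K" and "continuous_map X K e"
    and "K closure_of (e ` topspace X) = topspace K" and "bounded_functions_extend X K e"
proof -
  have "embedding_map X K e"
    using assms unfolding Cech_Stone_compactification_def by blast
  then show "continuous_map X K e"
    unfolding embedding_map_def
    using continuous_map_in_subtopology homeomorphic_imp_continuous_map by blast
qed (use assms in \<open>auto simp: Cech_Stone_compactification_def bounded_functions_extend_def\<close>)

theorem proposition2p2:
  fixes X :: "'a topology"
  assumes "Tychonoff_space X"
  shows "(\<forall>Y. finite_C_space X \<and> C_star_embedded X Y \<longrightarrow> finite_C_space (subtopology X Y)) \<and>
         (\<forall>(K :: 'b topology) e. Cech_Stone_compactification X K e \<longrightarrow>
            (finite_C_space X \<longleftrightarrow> C_space K))"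
proof (intro conjI allI impI)
  fix Y
  assume "finite_C_space X \<and> C_star_embedded X Y"
  then show "finite_C_space (subtopology X Y)"
    using finite_C_space_pullback[OF _ continuous_map_id_subt]
      C_star_embedded_imp_bounded_functions_extend by blast
next
  fix K :: "'b topology" and e
  assume "Cech_Stone_compactification X K e"
  note K = Cech_Stone_compactificationD[OF this]
  show "finite_C_space X \<longleftrightarrow> C_space K"
  proof
    assume "finite_C_space X"
    then show "C_space K"
      using K compact_space_finite_C_space_imp_C_space finite_C_space_dense_extension by blast
  next
    assume "C_space K"
    then show "finite_C_space X"
      using K compact_space_C_space_imp_finite_C_space finite_C_space_pullback by blast
  qed
qed

end
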